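(* For every $z\in\Omega_\theta$ the following hold: (a) $\|W\|_F^2\le \theta/\lambda_2$, $\|V\|_1\le \theta/\lambda_1$ and $\|b_+\|_\infty\le\alpha$, where $b_+=(b)_+$; (b) $\bar z=\mathrm{Proj}_{\Omega_3}(z)$ belongs to $\mathcal{Z}$ and $\mathcal{O}(\bar z)=\mathcal{O}(z)$. Moreover, the set $\mathcal{Z}^*$ of global minimizers of problem (LRP) is nonempty and bounded, and $\mathcal{Z}^*\subset\mathcal{S}$, where $\mathcal{S}$ is the set of global minimizers of problem (RP).
   Context: Let $N,N_0,N_1$ be positive integers, $X=(x_1,\ldots,x_N)\in\mathbb{R}^{N_0\times N}$ a given data matrix, and $\lambda_1,\lambda_2,\beta>0$ given parameters. For a real vector $y$, $(y)_+=\max\{y,0\}$ componentwise; $e$ denotes the all-ones vector of $\mathbb{R}^{N_1}$. For a matrix $Y$, $\|Y\|_F$ is the Frobenius norm and $\|Y\|_1$ the maximum absolute column sum. The variable is $z=(\mathrm{vec}(W)^\top,b^\top,\mathrm{vec}(V)^\top)^\top\in\mathbb{R}^{N_2}$, $N_2=N_0N_1+N_1+N_0+N_1N$, where $W\in\mathbb{R}^{N_1\times N_0}$, $b=(b_1^\top,b_2^\top)^\top$ with $b_1\in\mathbb{R}^{N_1}$, $b_2\in\mathbb{R}^{N_0}$, $V=(v_1,\ldots,v_N)\in\mathbb{R}^{N_1\times N}$, and vec is columnwise vectorization. Define $\mathcal{F}(z)=\frac1N\sum_{n=1}^N\|(W^\top v_n+b_2)_+-x_n\|_2^2$, $\mathcal{R}(z)=\lambda_1\sum_{n=1}^N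 e^\top v_n+\lambda_2\|W\|_F^2$, $\mathcal{P}(z)=\beta\sum_{n=1}^N e^\top(v_n-(Wx_n+b_1)_+)$, and $\mathcal{O}=\mathcal{F}+\mathcal{R}+\mathcal{P}$. Let $\Omega_2=\{z: v_n\ge (Wx_n+b_1)_+,\ n=1,\ldots,N\}$. Fix $\theta>\frac1N\|X\|_F^2$ and set $\alpha=\max\left\{\frac{\theta}{\lambda_1}+\sqrt{\frac{N_1N_0\theta}{\lambda_2}}\|X\|_1,\ \frac{\theta\sqrt{N_1N_0\theta}}{\lambda_1\sqrt{\lambda_2}}+\sqrt{N\theta}+\|X\|_1\right\}$. Let $\Omega_3=\{z:\|b\|_\infty\le\alpha\}$, $\mathcal{Z}=\Omega_2\cap\Omega_3$, $\Omega_\theta=\{z\in\Omega_2:\mathcal{O}(z)\le\theta\}$, and $\mathrm{Proj}_{\Omega_3}$ the Euclidean projection onto the convex set $\Omega_3$. Problem (RP) is: minimize $\mathcal{O}(z)$ subject to $z\in\Omega_2$. Problem (LRP) is: minimize $\mathcal{O}(z)$ subject to $z\in\mathcal{Z}$. *)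

theory Defs
  imports "HOL-Analysis.Analysis"
begin

text \<open>Dimensions are finite index types: 'i (size N0, rows of X), 'h (size N1),
  'n (size N, number of samples).  The variable z = (W, (b1, b2), V) with
  W :: N1 x N0, b1 :: R^N1, b2 :: R^N0, V :: N1 x N (columns v_n).  The norm on this
  product type is the Euclidean norm of the stacked vector z in R^N2.\<close>

type_synonym ('i,'h,'n) var =
  "(real^'i^'h) \<times> ((real^'h) \<times> (real^'i)) \<times> (real^'n^'h)"

definition Wof :: "('i::finite,'h::finite,'n::finite) var \<Rightarrow> real^'i^'h" where
  "Wof z = fst z"
definition b1of :: "('i::finite,'h::finite,'n::finite) var \<Rightarrow> real^'h" where
  "b1of z = fst (fst (snd z))"
definition b2of :: "('i::finite,'h::finite,'n::finite) var \<Rightarrow> real^'i" where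
  "b2of z = snd (fst (snd z))"
definition Vof :: "('i::finite,'h::finite,'n::finite) var \<Rightarrow> real^'n^'h" where
  "Vof z = snd (snd z)"

definition pos :: "real \<Rightarrow> real" where "pos y = max y 0"

definition frob :: "real^'c^'r \<Rightarrow> real" where
  "frob A = sqrt (\<Sum>i\<in>UNIV. \<Sum>j\<in>UNIV. (A$i$j)^2)"
definition norm1 :: "real^'c::finite^'r::finite \<Rightarrow> real" where
  "norm1 A = Max ((\<lambda>j. \<Sum>i\<in>UNIV. \<bar>A$i$j\<bar>) ` UNIV)"

definition binf :: "('i::finite,'h::finite,'n::finite) var \<Rightarrow> real" where
  "binf z = max (Max ((\<lambda>i. \<bar>b1of z $ i\<bar>) ` UNIV)) (Max ((\<lambda>i. \<bar>b2of z $ i\<bar>) ` UNIV))"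
definition bposinf :: "('i::finite,'h::finite,'n::finite) var \<Rightarrow> real" where
  "bposinf z = max (Max ((\<lambda>i. \<bar>pos (b1of z $ i)\<bar>) ` UNIV))
                    (Max ((\<lambda>i. \<bar>pos (b2of z $ i)\<bar>) ` UNIV))"

definition dec :: "('i::finite,'h::finite,'n::finite) var \<Rightarrow> 'n \<Rightarrow> 'i \<Rightarrow> real" where
  "dec z n k = (\<Sum>j\<in>UNIV. Wof z $ j $ k * Vof z $ j $ n) + b2of z $ k"
definition enc :: "real^'n^'i \<Rightarrow> ('i::finite,'h::finite,'n::finite) var \<Rightarrow> 'n \<Rightarrow> 'h \<Rightarrow> real" where
  "enc X z n j = (\<Sum>k\<in>UNIV. Wof z $ j $ k * X $ k $ n) + b1of z $ j"

definition Fobj :: "real^'n^'i \<Rightarrow> ('i::finite,'h::finite,'n::finite) var \<Rightarrow> real" where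
  "Fobj X z = (1 / real CARD('n)) *
     (\<Sum>n\<in>UNIV. \<Sum>k\<in>UNIV. (pos (dec z n k) - X $ k $ n)^2)"
definition Robj :: "real \<Rightarrow> real \<Rightarrow> ('i::finite,'h::finite,'n::finite) var \<Rightarrow> real" where
  "Robj l1 l2 z = l1 * (\<Sum>n\<in>UNIV. \<Sum>j\<in>UNIV. Vof z $ j $ n) + l2 * (frob (Wof z))^2"
definition Pobj :: "real^'n^'i \<Rightarrow> real \<Rightarrow> ('i::finite,'h::finite,'n::finite) var \<Rightarrow> real" where
  "Pobj X beta z = beta * (\<Sum>n\<in>UNIV. \<Sum>j\<in>UNIV. Vof z $ j $ n - pos (enc X z n j))"
definition Oobj :: "real^'n^'i \<Rightarrow> real \<Rightarrow> real \<Rightarrow> real \<Rightarrow> ('i::finite,'h::finite,'n::finite) var \<Rightarrow> real" where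
  "Oobj X l1 l2 beta z = Fobj X z + Robj l1 l2 z + Pobj X beta z"

definition Omega2 :: "real^'n^'i \<Rightarrow> ('i::finite,'h::finite,'n::finite) var set" where
  "Omega2 X = {z. \<forall>n j. Vof z $ j $ n \<ge> pos (enc X z n j)}"
definition Omega3 :: "real \<Rightarrow> ('i::finite,'h::finite,'n::finite) var set" where
  "Omega3 a = {z. binf z \<le> a}"

definition alpha :: "real^'n::finite^'i::finite \<Rightarrow> 'h::finite itself \<Rightarrow> real \<Rightarrow> real \<Rightarrow> real \<Rightarrow> real" where
  "alpha X _ l1 l2 th = max
     (th / l1 + sqrt (real CARD('h) * real CARD('i) * th / l2) * norm1 X)
     (th * sqrt (real CARD('h) * real CARD('i) * th) / (l1 * sqrt l2)
        + sqrt (real CARD('n) * th) + norm1 X)"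

end

theory Submission
  imports Defs
begin

text \<open>On the sublevel set \<open>{z \<in> \<Omega>\<^sub>2. \<O> z \<le> \<theta>}\<close> each of the nonnegative summands of \<open>\<O>\<close>
  is at most \<open>\<theta>\<close>; this bounds \<open>\<parallel>W\<parallel>\<^sub>F\<close> and the entries of \<open>V\<close>, hence the linear parts
  \<open>W x\<^sub>n\<close> and \<open>W\<^sup>T v\<^sub>n\<close>, and through the constraint \<open>v\<^sub>n \<ge> W x\<^sub>n + b\<^sub>1\<close> and the fitting
  term \<open>\<F>\<close> also the biases from above, all by \<open>\<alpha>\<close>.  Projecting onto \<open>\<Omega>\<^sub>3\<close> clamps every bias
  coordinate into \<open>[-\<alpha>, \<alpha>]\<close>; since the biases are already \<open>\<le> \<alpha>\<close>, only coordinates below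
  \<open>-\<alpha>\<close> move, and for those the pre-activation is \<open>\<le> 0\<close> before and after, so no ReLU value
  changes.  Thus (LRP) loses nothing against (RP), and its minimizers lie in the compact set
  \<open>\<Z> \<inter> {\<O> \<le> \<theta>}\<close>, which contains \<open>0\<close> because \<open>\<O> 0 = \<parallel>X\<parallel>\<^sub>F\<^sup>2 / N < \<theta>\<close>.\<close>

lemma frob_eq_norm: "frob A = norm (A::real^'c::finite^'r::finite)"
  unfolding frob_def norm_vec_def L2_set_def by (simp add: sum_nonneg)

lemma entry_le_frob: "\<bar>(A::real^'c::finite^'r::finite)$i$j\<bar> \<le> frob A"
  using component_le_norm_cart[of "A$i" j] Finite_Cartesian_Product.norm_nth_le[of A i]
  unfolding frob_eq_norm by linarith

lemma norm_le_sum_abs_entries: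
  "norm (A::real^'c::finite^'r::finite) \<le> (\<Sum>i\<in>UNIV. \<Sum>j\<in>UNIV. \<bar>A$i$j\<bar>)"
proof -
  have "norm A \<le> (\<Sum>i\<in>UNIV. norm (A$i))"
    unfolding norm_vec_def by (rule L2_set_le_sum) simp
  also have "\<dots> \<le> (\<Sum>i\<in>UNIV. \<Sum>j\<in>UNIV. \<bar>A$i$j\<bar>)"
    by (intro sum_mono norm_le_l1_cart)
  finally show ?thesis .
qed

lemma norm_le_card_mult:
  assumes "\<And>i. \<bar>(v::real^'a::finite) $ i\<bar> \<le> c"
  shows "norm v \<le> real CARD('a) * c"
  using norm_le_l1_cart[of v] sum_mono[of UNIV "\<lambda>i. \<bar>v $ i\<bar>" "\<lambda>_. c"] assms by simp

lemma column_sum_le_norm1: "(\<Sum>i\<in>UNIV. \<bar>(A::real^'c::finite^'r::finite)$i$j\<bar>) \<le> norm1 A"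
  unfolding norm1_def by (rule Max_ge) auto

lemma entry_le_norm1: "\<bar>(A::real^'c::finite^'r::finite)$i$j\<bar> \<le> norm1 A"
  using member_le_sum[of i UNIV "\<lambda>i. \<bar>A$i$j\<bar>"] column_sum_le_norm1[of A j] by simp

lemma norm1_nonneg: "0 \<le> norm1 (A::real^'c::finite^'r::finite)"
  using entry_le_norm1[of A] abs_ge_zero order_trans by blast

lemma norm1_le_sum_entries:
  assumes "\<And>i j. 0 \<le> (A::real^'c::finite^'r::finite)$i$j"
  shows "norm1 A \<le> (\<Sum>i\<in>UNIV. \<Sum>j\<in>UNIV. A$i$j)"
proof -
  have "(\<Sum>i\<in>UNIV. \<bar>A$i$j\<bar>) \<le> (\<Sum>i\<in>UNIV. \<Sum>j\<in>UNIV. A$i$j)" for j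
    using assms by (auto intro!: sum_mono member_le_sum)
  then show ?thesis unfolding norm1_def by simp
qed

lemma abs_sum_mult_le:
  assumes "\<And>k. k \<in> K \<Longrightarrow> \<bar>w k\<bar> \<le> (c::real)"
  shows "\<bar>\<Sum>k\<in>K. w k * x k\<bar> \<le> c * (\<Sum>k\<in>K. \<bar>x k\<bar>)"
proof -
  have "\<bar>\<Sum>k\<in>K. w k * x k\<bar> \<le> (\<Sum>k\<in>K. \<bar>w k\<bar> * \<bar>x k\<bar>)"
    using sum_abs[of "\<lambda>k. w k * x k" K] by (simp add: abs_mult)
  also have "\<dots> \<le> (\<Sum>k\<in>K. c * \<bar>x k\<bar>)" by (intro sum_mono mult_right_mono assms) auto
  finally show ?thesis by (simp add: sum_distrib_left)
qed

lemma pos_ge: "y \<le> pos y" and pos_nonneg: "0 \<le> pos y"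
  unfolding pos_def by simp_all

lemma Omega2_Vof_nonneg: "z \<in> Omega2 X \<Longrightarrow> 0 \<le> Vof z $ j $ n"
  unfolding Omega2_def using pos_nonneg order_trans by blast

lemma Omega2_enc_le: "z \<in> Omega2 X \<Longrightarrow> enc X z n j \<le> Vof z $ j $ n"
  unfolding Omega2_def using pos_ge order_trans by blast

lemma Fobj_nonneg: "0 \<le> Fobj X z"
  unfolding Fobj_def by (intro mult_nonneg_nonneg sum_nonneg) auto

lemma Pobj_nonneg: "0 \<le> beta \<Longrightarrow> z \<in> Omega2 X \<Longrightarrow> 0 \<le> Pobj X beta z"
  unfolding Pobj_def Omega2_def by (auto intro!: sum_nonneg mult_nonneg_nonneg)

lemma alpha_ge:
  fixes X :: "real^'n::finite^'i::finite"
  assumes l1: "0 < l1" and l2: "0 < l2" and th: "0 \<le> th"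
  shows "th / l1 + sqrt (th / l2) * norm1 X \<le> alpha X TYPE('h::finite) l1 l2 th"
    and "sqrt (th / l2) * (th / l1) + sqrt (real CARD('n) * th) + norm1 X
           \<le> alpha X TYPE('h) l1 l2 th"
proof -
  define c where "c = real CARD('h) * real CARD('i)"
  have "1 \<le> c" unfolding c_def using mult_mono[of 1 "real CARD('h)" 1 "real CARD('i)"]
    by (simp add: Suc_le_eq)
  then have "th \<le> c * th" using th mult_right_mono[of 1 c th] by simp
  then have sqrt_le: "sqrt (th / l2) \<le> sqrt (c * th / l2)" "sqrt th \<le> sqrt (c * th)"
    using l2 by (simp_all add: divide_right_mono)
  have "sqrt (th / l2) * (th / l1) = th * sqrt th / (l1 * sqrt l2)"
    using l1 l2 by (simp add: real_sqrt_divide field_simps)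
  also have "\<dots> \<le> th * sqrt (c * th) / (l1 * sqrt l2)"
    using sqrt_le(2) l1 l2 th by (intro divide_right_mono mult_left_mono) simp_all
  finally have "sqrt (th / l2) * (th / l1) \<le> th * sqrt (c * th) / (l1 * sqrt l2)" .
  moreover have "sqrt (th / l2) * norm1 X \<le> sqrt (c * th / l2) * norm1 X"
    using sqrt_le(1) norm1_nonneg by (rule mult_right_mono)
  ultimately show "th / l1 + sqrt (th / l2) * norm1 X \<le> alpha X TYPE('h) l1 l2 th"
    and "sqrt (th / l2) * (th / l1) + sqrt (real CARD('n) * th) + norm1 X
           \<le> alpha X TYPE('h) l1 l2 th"
    unfolding alpha_def c_def by (simp_all add: mult.assoc)
qed

lemma alpha_nonneg:
  assumes "0 < l1" "0 < l2" "0 \<le> th"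
  shows "0 \<le> alpha X TYPE('h::finite) l1 l2 th"
proof -
  have "0 \<le> th / l1 + sqrt (th / l2) * norm1 X"
    using assms norm1_nonneg[of X] by simp
  then show ?thesis using alpha_ge(1)[OF assms, of X, where 'h='h] by linarith
qed

definition clamp_vec :: "real \<Rightarrow> real^'a::finite \<Rightarrow> real^'a" where
  "clamp_vec a v = (\<chi> i. max (-a) (min a (v$i)))"

lemma clamp_vec_nth [simp]: "clamp_vec a v $ i = max (-a) (min a (v$i))"
  unfolding clamp_vec_def by simp

definition clamp_bias ::
  "real \<Rightarrow> ('i::finite, 'h::finite, 'n::finite) var \<Rightarrow> ('i, 'h, 'n) var" where
  "clamp_bias a z = (Wof z, (clamp_vec a (b1of z), clamp_vec a (b2of z)), Vof z)"

lemma clamp_bias_simps [simp]: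
  "Wof (clamp_bias a z) = Wof z" "Vof (clamp_bias a z) = Vof z"
  "b1of (clamp_bias a z) = clamp_vec a (b1of z)" "b2of (clamp_bias a z) = clamp_vec a (b2of z)"
  unfolding clamp_bias_def Wof_def Vof_def b1of_def b2of_def by simp_all

lemma pos_add_clamp:
  assumes "e \<le> a" "b \<le> a"
  shows "pos (e + max (-a) (min a b)) = pos (e + b)"
  using assms unfolding pos_def by auto

lemma pos_enc_clamp_bias:
  assumes "(\<Sum>k\<in>UNIV. Wof z $ j $ k * X $ k $ n) \<le> a" "b1of z $ j \<le> a"
  shows "pos (enc X (clamp_bias a z) n j) = pos (enc X z n j)"
  using pos_add_clamp[OF assms] unfolding enc_def by simp

lemma pos_dec_clamp_bias:
  assumes "(\<Sum>j\<in>UNIV. Wof z $ j $ k * Vof z $ j $ n) \<le> a" "b2of z $ k \<le> a"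
  shows "pos (dec (clamp_bias a z) n k) = pos (dec z n k)"
  using pos_add_clamp[OF assms] unfolding dec_def by simp

lemma Omega3_eq_Times:
  "Omega3 a = UNIV \<times> (cbox (- (\<chi> i. a)) (\<chi> i. a) \<times> cbox (- (\<chi> i. a)) (\<chi> i. a)) \<times> UNIV"
  unfolding Omega3_def binf_def b1of_def b2of_def
  by (auto simp: mem_box_cart abs_le_iff minus_le_iff)

lemma dist_clamp_vec_le:
  assumes "\<And>i. \<bar>c $ i\<bar> \<le> a"
  shows "dist v (clamp_vec a v) \<le> dist v c"
  unfolding dist_vec_def
proof (rule L2_set_mono)
  show "dist (v$i) (clamp_vec a v $ i) \<le> dist (v$i) (c$i)" for i
    using assms[of i] unfolding dist_real_def by (auto simp: abs_le_iff)
qed simp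

lemma dist_Pair_mono:
  assumes "dist a c \<le> dist a' c'" "dist b d \<le> dist b' d'"
  shows "dist (a, b) (c, d) \<le> dist (a', b') (c', d')"
  unfolding dist_Pair_Pair by (intro real_sqrt_le_mono add_mono power_mono assms zero_le_dist)

lemma convex_Omega3: "convex (Omega3 a)"
  unfolding Omega3_eq_Times by (intro convex_Times convex_box; simp)

lemma closed_Omega3: "closed (Omega3 a)"
  unfolding Omega3_eq_Times by (intro closed_Times closed_cbox; simp)

lemma clamp_bias_mem_Omega3: "0 \<le> a \<Longrightarrow> clamp_bias a z \<in> Omega3 a"
  unfolding Omega3_eq_Times by (auto simp: clamp_bias_def mem_box_cart)

lemma closest_point_Omega3:
  fixes z :: "('i::finite, 'h::finite, 'n::finite) var"
  assumes "0 \<le> a"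
  shows "closest_point (Omega3 a) z = clamp_bias a z"
proof (rule closest_point_unique[symmetric,
      OF convex_Omega3 closed_Omega3 clamp_bias_mem_Omega3[OF assms]])
  show "\<forall>y\<in>Omega3 a. dist z (clamp_bias a z) \<le> dist z y"
  proof
    fix y :: "('i, 'h, 'n) var" assume "y \<in> Omega3 a"
    then obtain W c1 c2 V where y: "y = (W, (c1, c2), V)"
      and "\<And>i. \<bar>c1 $ i\<bar> \<le> a" "\<And>i. \<bar>c2 $ i\<bar> \<le> a"
      unfolding Omega3_eq_Times by (auto simp: mem_box_cart abs_le_iff minus_le_iff)
    then show "dist z (clamp_bias a z) \<le> dist z y"
      unfolding clamp_bias_def
      by (cases z)
        (auto simp: Wof_def Vof_def b1of_def b2of_def intro!: dist_Pair_mono dist_clamp_vec_le)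
  qed
qed

locale Omega2_sublevel =
  fixes X :: "real^'n::finite^'i::finite" and l1 l2 beta th :: real
    and z :: "('i, 'h::finite, 'n) var"
  assumes l1: "0 < l1" and l2: "0 < l2" and beta: "0 \<le> beta"
    and feasible: "z \<in> Omega2 X" and sublevel: "Oobj X l1 l2 beta z \<le> th"
begin

lemma V_nonneg: "0 \<le> Vof z $ j $ n"
  using Omega2_Vof_nonneg[OF feasible] .

lemma objective_parts_le:
  "Fobj X z \<le> th" "(frob (Wof z))^2 \<le> th / l2"
  "(\<Sum>n\<in>UNIV. \<Sum>j\<in>UNIV. Vof z $ j $ n) \<le> th / l1"
proof -
  have "0 \<le> l1 * (\<Sum>n\<in>UNIV. \<Sum>j\<in>UNIV. Vof z $ j $ n)"
    using l1 V_nonneg by (simp add: sum_nonneg)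
  moreover have "0 \<le> l2 * (frob (Wof z))^2" using l2 by simp
  ultimately have "Fobj X z \<le> th \<and> l2 * (frob (Wof z))^2 \<le> th
      \<and> l1 * (\<Sum>n\<in>UNIV. \<Sum>j\<in>UNIV. Vof z $ j $ n) \<le> th"
    using Fobj_nonneg[of X z] Pobj_nonneg[OF beta feasible] sublevel
    unfolding Oobj_def Robj_def by linarith
  then show "Fobj X z \<le> th" "(frob (Wof z))^2 \<le> th / l2"
    "(\<Sum>n\<in>UNIV. \<Sum>j\<in>UNIV. Vof z $ j $ n) \<le> th / l1"
    using l1 l2 by (simp_all add: pos_le_divide_eq mult.commute)
qed

lemma th_nonneg: "0 \<le> th"
  using objective_parts_le(1) Fobj_nonneg order_trans by blast

lemma frob_W_le: "frob (Wof z) \<le> sqrt (th / l2)"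
  using objective_parts_le(2) by (rule real_le_rsqrt)

lemma V_column_sum_le: "(\<Sum>j\<in>UNIV. Vof z $ j $ n) \<le> th / l1"
  using member_le_sum[of n UNIV "\<lambda>n. \<Sum>j\<in>UNIV. Vof z $ j $ n"] V_nonneg objective_parts_le(3)
  by (simp add: sum_nonneg)

lemma V_le: "Vof z $ j $ n \<le> th / l1"
  using member_le_sum[of j UNIV "\<lambda>j. Vof z $ j $ n"] V_nonneg V_column_sum_le[of n] by simp

lemma norm1_V_le: "norm1 (Vof z) \<le> th / l1"
proof -
  have "norm1 (Vof z) \<le> (\<Sum>j\<in>UNIV. \<Sum>n\<in>UNIV. Vof z $ j $ n)"
    by (rule norm1_le_sum_entries) (rule V_nonneg)
  also have "\<dots> = (\<Sum>n\<in>UNIV. \<Sum>j\<in>UNIV. Vof z $ j $ n)" by (rule sum.swap)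
  finally show ?thesis using objective_parts_le(3) by linarith
qed

lemma encoder_weight_bound:
  "\<bar>\<Sum>k\<in>UNIV. Wof z $ j $ k * X $ k $ n\<bar> \<le> sqrt (th / l2) * norm1 X"
proof -
  have "\<bar>\<Sum>k\<in>UNIV. Wof z $ j $ k * X $ k $ n\<bar> \<le> frob (Wof z) * (\<Sum>k\<in>UNIV. \<bar>X $ k $ n\<bar>)"
    by (intro abs_sum_mult_le entry_le_frob)
  also have "\<dots> \<le> sqrt (th / l2) * norm1 X"
    using th_nonneg l2 by (intro mult_mono frob_W_le column_sum_le_norm1) (simp_all add: sum_nonneg)
  finally show ?thesis .
qed

lemma decoder_weight_bound:
  "\<bar>\<Sum>j\<in>UNIV. Wof z $ j $ k * Vof z $ j $ n\<bar> \<le> sqrt (th / l2) * (th / l1)"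
proof -
  have "\<bar>\<Sum>j\<in>UNIV. Wof z $ j $ k * Vof z $ j $ n\<bar> \<le> frob (Wof z) * (\<Sum>j\<in>UNIV. Vof z $ j $ n)"
    using abs_sum_mult_le[of UNIV "\<lambda>j. Wof z $ j $ k" "frob (Wof z)" "\<lambda>j. Vof z $ j $ n"] V_nonneg
    by (simp add: entry_le_frob)
  also have "\<dots> \<le> sqrt (th / l2) * (th / l1)"
    using th_nonneg l2 by (intro mult_mono frob_W_le V_column_sum_le) (simp_all add: sum_nonneg V_nonneg)
  finally show ?thesis .
qed

lemma pos_dec_le: "pos (dec z n k) \<le> sqrt (real CARD('n) * th) + norm1 X"
proof -
  let ?r = "\<lambda>n k. (pos (dec z n k) - X $ k $ n)^2"
  have "?r n k \<le> (\<Sum>k\<in>UNIV. ?r n k)"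
    by (rule member_le_sum[where f="?r n"]) auto
  also have "\<dots> \<le> (\<Sum>n\<in>UNIV. \<Sum>k\<in>UNIV. ?r n k)"
    by (rule member_le_sum[where f="\<lambda>n. \<Sum>k\<in>UNIV. ?r n k"]) (auto intro: sum_nonneg)
  also have "\<dots> = real CARD('n) * Fobj X z" unfolding Fobj_def by simp
  also have "\<dots> \<le> real CARD('n) * th" using objective_parts_le(1) by simp
  finally have "\<bar>pos (dec z n k) - X $ k $ n\<bar> \<le> sqrt (real CARD('n) * th)"
    using real_le_rsqrt[of "\<bar>pos (dec z n k) - X $ k $ n\<bar>"] by simp
  then show ?thesis using entry_le_norm1[of X k n] by linarith
qed

text \<open>Any sample index serves for the bias bounds; \<^const>\<open>undefined\<close> is one.\<close>

lemma b1_le: "b1of z $ j \<le> th / l1 + sqrt (th / l2) * norm1 X"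
  using Omega2_enc_le[OF feasible, of undefined j] V_le[of j undefined]
    encoder_weight_bound[of j undefined]
  unfolding enc_def by linarith

lemma b2_le:
  "b2of z $ k \<le> sqrt (th / l2) * (th / l1) + sqrt (real CARD('n) * th) + norm1 X"
  using pos_ge[of "dec z undefined k"] pos_dec_le[of undefined k]
    decoder_weight_bound[of k undefined]
  unfolding dec_def by linarith

lemma alpha_ge_bounds:
  "th / l1 + sqrt (th / l2) * norm1 X \<le> alpha X TYPE('h) l1 l2 th"
  "sqrt (th / l2) * (th / l1) + sqrt (real CARD('n) * th) + norm1 X \<le> alpha X TYPE('h) l1 l2 th"
  using alpha_ge[OF l1 l2 th_nonneg, of X, where 'h='h] by simp_all

lemma bound_terms_nonneg:
  "0 \<le> th / l1" "0 \<le> sqrt (real CARD('n) * th)" "0 \<le> norm1 X"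
  using th_nonneg l1 l2 norm1_nonneg[of X] by simp_all

lemma weight_terms_le_alpha:
  "(\<Sum>k\<in>UNIV. Wof z $ j $ k * X $ k $ n) \<le> alpha X TYPE('h) l1 l2 th"
  "(\<Sum>j\<in>UNIV. Wof z $ j $ k * Vof z $ j $ n) \<le> alpha X TYPE('h) l1 l2 th"
  using alpha_ge_bounds bound_terms_nonneg encoder_weight_bound[of j n] decoder_weight_bound[of k n]
  by linarith+

lemma bias_le_alpha:
  "b1of z $ j \<le> alpha X TYPE('h) l1 l2 th" "b2of z $ k \<le> alpha X TYPE('h) l1 l2 th"
  using alpha_ge_bounds b1_le[of j] b2_le[of k] by linarith+

lemma bposinf_le_alpha: "bposinf z \<le> alpha X TYPE('h) l1 l2 th"
  using bias_le_alpha alpha_nonneg[OF l1 l2 th_nonneg, of X, where 'h='h]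
  unfolding bposinf_def pos_def by simp

lemma clamp_bias_mem_Omega2: "clamp_bias (alpha X TYPE('h) l1 l2 th) z \<in> Omega2 X"
  using feasible pos_enc_clamp_bias[OF weight_terms_le_alpha(1) bias_le_alpha(1)]
  unfolding Omega2_def by simp

lemma Oobj_clamp_bias:
  "Oobj X l1 l2 beta (clamp_bias (alpha X TYPE('h) l1 l2 th) z) = Oobj X l1 l2 beta z"
  unfolding Oobj_def Fobj_def Robj_def Pobj_def
  by (simp add: pos_enc_clamp_bias[OF weight_terms_le_alpha(1) bias_le_alpha(1)]
      pos_dec_clamp_bias[OF weight_terms_le_alpha(2) bias_le_alpha(2)])

lemma norm_var_le: "norm z \<le> sqrt (th / l2) + norm (b1of z) + norm (b2of z) + th / l1"
proof -
  have "norm z \<le> norm (Wof z) + norm ((b1of z, b2of z), Vof z)"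
    using norm_Pair_le[of "Wof z" "((b1of z, b2of z), Vof z)"]
    by (simp add: Wof_def b1of_def b2of_def Vof_def)
  also have "norm ((b1of z, b2of z), Vof z) \<le> norm (b1of z) + norm (b2of z) + norm (Vof z)"
    using norm_Pair_le[of "(b1of z, b2of z)" "Vof z"] norm_Pair_le[of "b1of z" "b2of z"] by linarith
  also have "norm (Vof z) \<le> (\<Sum>j\<in>UNIV. \<Sum>n\<in>UNIV. Vof z $ j $ n)"
    using norm_le_sum_abs_entries[of "Vof z"] V_nonneg by simp
  also have "\<dots> \<le> th / l1"
    using objective_parts_le(3) sum.swap[of "\<lambda>j n. Vof z $ j $ n" UNIV UNIV] by simp
  finally show ?thesis using frob_W_le unfolding frob_eq_norm by linarith
qed

end

lemma Omega2_zero: "0 \<in> Omega2 X"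
  unfolding Omega2_def by (simp add: enc_def Wof_def Vof_def b1of_def pos_def)

lemma Oobj_zero:
  fixes X :: "real^'n::finite^'i::finite"
  shows "Oobj X l1 l2 beta (0 :: ('i, 'h::finite, 'n) var) = (1 / real CARD('n)) * (frob X)^2"
proof -
  have "(frob X)^2 = (\<Sum>k\<in>UNIV. \<Sum>n\<in>UNIV. (X $ k $ n)^2)"
    unfolding frob_def by (simp add: sum_nonneg)
  also have "\<dots> = (\<Sum>n\<in>UNIV. \<Sum>k\<in>UNIV. (X $ k $ n)^2)" by (rule sum.swap)
  finally have "(frob X)^2 = (\<Sum>n\<in>UNIV. \<Sum>k\<in>UNIV. (X $ k $ n)^2)" .
  then show ?thesis
    unfolding Oobj_def Fobj_def Robj_def Pobj_def
    by (simp add: dec_def enc_def Wof_def Vof_def b1of_def b2of_def pos_def frob_eq_norm)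
qed

lemma continuous_on_Oobj: "continuous_on UNIV (Oobj X l1 l2 beta)"
  unfolding Oobj_def Fobj_def Robj_def Pobj_def frob_def pos_def dec_def enc_def
    Wof_def Vof_def b1of_def b2of_def
  by (intro continuous_intros)

lemma closed_Omega2: "closed (Omega2 X)"
  unfolding Omega2_def pos_def enc_def Wof_def Vof_def b1of_def b2of_def
  by (intro closed_Collect_all closed_Collect_le continuous_intros)

lemma bounded_Oobj_sublevel:
  fixes X :: "real^'n::finite^'i::finite"
  assumes "0 < l1" "0 < l2" "0 \<le> beta"
  shows "bounded {z :: ('i, 'h::finite, 'n) var. z \<in> Omega2 X \<inter> Omega3 a \<and> Oobj X l1 l2 beta z \<le> th}"
  unfolding bounded_iff
proof (intro exI ballI)
  fix z :: "('i, 'h, 'n) var"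
  assume z: "z \<in> {z. z \<in> Omega2 X \<inter> Omega3 a \<and> Oobj X l1 l2 beta z \<le> th}"
  then interpret Omega2_sublevel X l1 l2 beta th z
    using assms by unfold_locales auto
  have "\<bar>b1of z $ j\<bar> \<le> a" "\<bar>b2of z $ k\<bar> \<le> a" for j k
    using z unfolding Omega3_def binf_def by (auto simp: Max_le_iff)
  then show "norm z \<le> sqrt (th / l2) + real CARD('h) * a + real CARD('i) * a + th / l1"
    using norm_var_le norm_le_card_mult[of "b1of z" a] norm_le_card_mult[of "b2of z" a] by simp
qed

lemma argmin_nonempty_bounded:
  fixes f :: "'a::heine_borel \<Rightarrow> real"
  assumes f: "continuous_on S f" and S: "closed S" and x0: "x0 \<in> S" "f x0 \<le> c"
    and bounded_sublevel: "bounded {x \<in> S. f x \<le> c}"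
  shows "{x \<in> S. \<forall>y\<in>S. f x \<le> f y} \<noteq> {}" "bounded {x \<in> S. \<forall>y\<in>S. f x \<le> f y}"
proof -
  let ?K = "{x \<in> S. f x \<le> c}"
  have "compact ?K"
    using continuous_on_closed_Collect_le[OF f continuous_on_const S] bounded_sublevel
    by (simp add: compact_eq_bounded_closed)
  moreover have "continuous_on ?K f" using f by (rule continuous_on_subset) auto
  ultimately obtain xm where xm: "xm \<in> ?K" "\<forall>y\<in>?K. f xm \<le> f y"
    using continuous_attains_inf[of ?K f] x0 by blast
  then have "\<forall>y\<in>S. f xm \<le> f y" using x0 by force
  then show "{x \<in> S. \<forall>y\<in>S. f x \<le> f y} \<noteq> {}" using xm by blast
  have "{x \<in> S. \<forall>y\<in>S. f x \<le> f y} \<subseteq> ?K" using x0 by force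
  then show "bounded {x \<in> S. \<forall>y\<in>S. f x \<le> f y}" by (rule bounded_subset[OF bounded_sublevel])
qed

lemma argmin_subset_argmin:
  fixes f :: "'a \<Rightarrow> 'b::linorder"
  assumes "Z \<subseteq> S" "x0 \<in> Z" "f x0 \<le> c"
    and retract: "\<And>y. y \<in> S \<Longrightarrow> f y \<le> c \<Longrightarrow> \<exists>y'\<in>Z. f y' \<le> f y"
  shows "{x \<in> Z. \<forall>y\<in>Z. f x \<le> f y} \<subseteq> {x \<in> S. \<forall>y\<in>S. f x \<le> f y}"
proof safe
  fix x y assume x: "x \<in> Z" "\<forall>y\<in>Z. f x \<le> f y" and y: "y \<in> S"
  show "f x \<le> f y"
  proof (cases "f y \<le> c")
    case True
    then show ?thesis using retract[OF y] x order_trans by blast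
  next
    case False
    then show ?thesis using x assms(2,3) by force
  qed
qed (use assms(1) in blast)

theorem theorem2p1:
  fixes X :: "real^'n::finite^'i::finite"
    and l1 l2 beta th :: real
  assumes l1: "l1 > 0" and l2: "l2 > 0" and beta: "beta > 0"
    and th: "th > (1 / real CARD('n)) * (frob X)^2"
  defines "a \<equiv> alpha X TYPE('h::finite) l1 l2 th"
    and "Ob \<equiv> (Oobj X l1 l2 beta :: ('i,'h,'n) var \<Rightarrow> real)"
  defines "Z \<equiv> Omega2 X \<inter> Omega3 a"
    and "Omth \<equiv> {z \<in> Omega2 X. Ob z \<le> th}"
  defines "Zstar \<equiv> {z \<in> Z. \<forall>y\<in>Z. Ob z \<le> Ob y}"
    and "S \<equiv> {z \<in> Omega2 X. \<forall>y\<in>Omega2 X. Ob z \<le> Ob y}"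
  shows "(\<forall>z\<in>Omth.
            (frob (Wof z))^2 \<le> th / l2 \<and> norm1 (Vof z) \<le> th / l1 \<and> bposinf z \<le> a
          \<and> closest_point (Omega3 a) z \<in> Z \<and> Ob (closest_point (Omega3 a) z) = Ob z)
       \<and> Zstar \<noteq> {} \<and> bounded Zstar \<and> Zstar \<subseteq> S"
proof -
  have "0 \<le> (1 / real CARD('n)) * (frob X)^2" by simp
  then have th0: "0 \<le> th" using th by linarith
  have a0: "0 \<le> a" unfolding a_def using l1 l2 th0 by (rule alpha_nonneg)
  have Ob_zero: "Ob 0 \<le> th" "0 \<in> Z"
    using th a0 by (auto simp: Ob_def Z_def Oobj_zero Omega2_zero Omega3_def binf_def b1of_def b2of_def)
  have sublevel: "(frob (Wof z))^2 \<le> th / l2 \<and> norm1 (Vof z) \<le> th / l1 \<and> bposinf z \<le> a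
      \<and> clamp_bias a z \<in> Z \<and> Ob (clamp_bias a z) = Ob z" if "z \<in> Omth" for z
  proof -
    interpret Omega2_sublevel X l1 l2 beta th z
      using that l1 l2 beta unfolding Omth_def Ob_def by unfold_locales auto
    show ?thesis
      using objective_parts_le(2) norm1_V_le bposinf_le_alpha clamp_bias_mem_Omega2
        clamp_bias_mem_Omega3[OF a0] Oobj_clamp_bias
      unfolding Ob_def Z_def a_def by simp
  qed
  have "continuous_on Z Ob" unfolding Ob_def by (rule continuous_on_subset[OF continuous_on_Oobj]) simp
  moreover have "closed Z" unfolding Z_def by (intro closed_Int closed_Omega2 closed_Omega3)
  moreover have "bounded {z \<in> Z. Ob z \<le> th}"
    using bounded_Oobj_sublevel[OF l1 l2 less_imp_le[OF beta]] unfolding Z_def Ob_def by simp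
  ultimately have "Zstar \<noteq> {}" "bounded Zstar"
    using argmin_nonempty_bounded[of Z Ob 0 th] Ob_zero unfolding Zstar_def by auto
  moreover have "Zstar \<subseteq> S"
    unfolding Zstar_def S_def
  proof (rule argmin_subset_argmin[of Z "Omega2 X" 0 Ob th])
    show "\<exists>y'\<in>Z. Ob y' \<le> Ob y" if "y \<in> Omega2 X" "Ob y \<le> th" for y
      using sublevel[of y] that unfolding Omth_def by (intro bexI[of _ "clamp_bias a y"]) auto
  qed (use Ob_zero in \<open>auto simp: Z_def\<close>)
  ultimately show ?thesis
    unfolding closest_point_Omega3[OF a0] using sublevel by blast
qed

end
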